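(* Let $P(\lambda)=\sum_{j=0}^m A_j\lambda^j$ and $\Delta(\lambda)=\sum_{j=0}^m\Delta_j\lambda^j$ be $n\times n$ complex matrix polynomials, and let $\mu_1\neq\mu_2$ be complex numbers. If $\mu_1$ and $\mu_2$ are both eigenvalues of $Q(\lambda)=P(\lambda)+\Delta(\lambda)$, then for every $\gamma\neq 0$, $$ s_{2n-1}\big(F[P(\mu_1,\mu_2);\gamma]\big)\le \big\|F[\Delta(\mu_1,\mu_2);\gamma]\big\|. $$
   Context: For an $n\times n$ matrix polynomial $R(\lambda)$, distinct $\mu_1,\mu_2\in\mathbb{C}$ and $\gamma\in\mathbb{C}$, define the divided difference $R[\mu_1,\mu_2]=\frac{R(\mu_1)-R(\mu_2)}{\mu_1-\mu_2}$ and the $2n\times 2n$ matrix $F[R(\mu_1,\mu_2);\gamma]=\begin{bmatrix} R(\mu_1) & 0\\ \gamma R[\mu_1,\mu_2] & R(\mu_2)\end{bmatrix}$. For a matrix $M\in\mathbb{C}^{2n\times 2n}$, $s_1(M)\ge s_2(M)\ge\dots\ge s_{2n}(M)$ denote its singular values, so $s_{2n-1}$ is the second smallest. $\|\cdot\|$ is the spectral norm. A scalar $\lambda_0$ is an eigenvalue of a matrix polynomial $Q$ if $Q(\lambda_0)x=0$ for some nonzero $x\in\mathbb{C}^n$. *)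

theory Defs
  imports "Jordan_Normal_Form.Char_Poly" "HOL-Computational_Algebra.Polynomial"
begin

definition mpoly_eval :: "nat \<Rightarrow> nat \<Rightarrow> (nat \<Rightarrow> complex mat) \<Rightarrow> complex \<Rightarrow> complex mat" where
  "mpoly_eval n m C lam = mat n n (\<lambda>(i,k). \<Sum>j\<le>m. (C j) $$ (i,k) * lam ^ j)"

definition divdiff :: "(complex \<Rightarrow> complex mat) \<Rightarrow> complex \<Rightarrow> complex \<Rightarrow> complex mat" where
  "divdiff R mu1 mu2 = (1 / (mu1 - mu2)) \<cdot>\<^sub>m (R mu1 - R mu2)"

definition Fmat :: "nat \<Rightarrow> (complex \<Rightarrow> complex mat) \<Rightarrow> complex \<Rightarrow> complex \<Rightarrow> complex \<Rightarrow> complex mat" where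
  "Fmat n R mu1 mu2 gamma =
     four_block_mat (R mu1) (0\<^sub>m n n) (gamma \<cdot>\<^sub>m divdiff R mu1 mu2) (R mu2)"

definition cadj :: "complex mat \<Rightarrow> complex mat" where
  "cadj M = mat (dim_col M) (dim_row M) (\<lambda>(i,j). cnj (M $$ (j,i)))"

definition sing_vals :: "complex mat \<Rightarrow> real list" where
  "sing_vals M = rev (sorted_list_of_multiset
      (image_mset (\<lambda>z. sqrt (Re z)) (proots (char_poly (cadj M * M)))))"

definition sval :: "nat \<Rightarrow> complex mat \<Rightarrow> real" where
  "sval k M = sing_vals M ! (k - 1)"

definition vnorm2 :: "complex vec \<Rightarrow> real" where
  "vnorm2 x = sqrt (\<Sum>i<dim_vec x. (cmod (x $ i))\<^sup>2)"

definition spec_norm :: "complex mat \<Rightarrow> real" where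
  "spec_norm M = Sup {vnorm2 (M *\<^sub>v x) | x. x \<in> carrier_vec (dim_col M) \<and> vnorm2 x = 1}"

definition is_mp_eigenvalue :: "nat \<Rightarrow> (complex \<Rightarrow> complex mat) \<Rightarrow> complex \<Rightarrow> bool" where
  "is_mp_eigenvalue n Q lam0 \<longleftrightarrow>
     (\<exists>x. x \<in> carrier_vec n \<and> x \<noteq> 0\<^sub>v n \<and> Q lam0 *\<^sub>v x = 0\<^sub>v n)"

end

theory Submission
  imports Defs "Jordan_Normal_Form.Schur_Decomposition"
begin

text \<open>
  If \<open>x\<^sub>1, x\<^sub>2\<close> are eigenvectors of \<open>Q = P + \<Delta>\<close> for \<open>\<mu>\<^sub>1, \<mu>\<^sub>2\<close>, then
  \<open>(0, x\<^sub>2)\<close> and \<open>(x\<^sub>1, \<gamma>/(\<mu>\<^sub>1 - \<mu>\<^sub>2) x\<^sub>1)\<close> are linearly independent vectors in the kernel of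
  \<open>F[Q;\<gamma>] = F[P;\<gamma>] + F[\<Delta>;\<gamma>]\<close>. On the plane they span, \<open>F[P;\<gamma>] x = - F[\<Delta>;\<gamma>] x\<close>, so
  \<open>\<parallel>F[P;\<gamma>] x\<parallel> \<le> \<parallel>F[\<Delta>;\<gamma>]\<parallel> \<parallel>x\<parallel>\<close> there. By the Courant--Fischer principle every plane contains a
  nonzero \<open>x\<close> with \<open>\<parallel>F x\<parallel> \<ge> s\<^sub>N\<^sub>-\<^sub>1(F) \<parallel>x\<parallel>\<close>, namely one orthogonal to a right singular
  vector of the smallest singular value; the singular vectors are obtained from the unitary
  diagonalisation of the Hermitian matrix \<open>F\<^sup>* F\<close>.
\<close>

lemma cadj_dims [simp]: "dim_row (cadj A) = dim_col A" "dim_col (cadj A) = dim_row A"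
  unfolding cadj_def by simp_all

lemma cadj_carrier [simp]: "A \<in> carrier_mat r c \<Longrightarrow> cadj A \<in> carrier_mat c r"
  unfolding carrier_mat_def by simp

lemma index_cadj [simp]:
  "i < dim_col A \<Longrightarrow> j < dim_row A \<Longrightarrow> cadj A $$ (i,j) = cnj (A $$ (j,i))"
  unfolding cadj_def by simp

lemma cadj_cadj [simp]: "cadj (cadj A) = A"
  by (rule eq_matI) auto

lemma cadj_mult:
  assumes A: "A \<in> carrier_mat r k" and B: "B \<in> carrier_mat k c"
  shows "cadj (A * B) = cadj B * cadj A"
proof (rule eq_matI)
  fix i j assume "i < dim_row (cadj B * cadj A)" "j < dim_col (cadj B * cadj A)"
  with A B have i: "i < c" and j: "j < r" by auto
  have "cadj (A * B) $$ (i,j) = cnj (\<Sum>l\<in>{0..<k}. A $$ (j,l) * B $$ (l,i))"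
    using i j A B by (simp add: scalar_prod_def)
  also have "\<dots> = (\<Sum>l\<in>{0..<k}. cnj (B $$ (l,i)) * cnj (A $$ (j,l)))"
    by (simp add: cnj_sum mult.commute)
  also have "\<dots> = (cadj B * cadj A) $$ (i,j)"
    using i j A B by (simp add: scalar_prod_def)
  finally show "cadj (A * B) $$ (i,j) = (cadj B * cadj A) $$ (i,j)" .
qed (use A B in auto)

lemma cadj_four_block_mat:
  assumes "A \<in> carrier_mat r1 c1" "B \<in> carrier_mat r1 c2"
    "C \<in> carrier_mat r2 c1" "D \<in> carrier_mat r2 c2"
  shows "cadj (four_block_mat A B C D) = four_block_mat (cadj A) (cadj C) (cadj B) (cadj D)"
  by (rule eq_matI) (use assms in auto)

lemma cinner_mult_mat_vec_cadj:
  assumes "M \<in> carrier_mat r c" "x \<in> carrier_vec c" "y \<in> carrier_vec r"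
  shows "(M *\<^sub>v x) \<bullet>c y = x \<bullet>c (cadj M *\<^sub>v y)"
proof -
  have "(M *\<^sub>v x) \<bullet>c y = (\<Sum>i\<in>{0..<r}. \<Sum>j\<in>{0..<c}. M $$ (i,j) * x $ j * cnj (y $ i))"
    using assms by (simp add: scalar_prod_def sum_distrib_right)
  also have "\<dots> = (\<Sum>j\<in>{0..<c}. \<Sum>i\<in>{0..<r}. M $$ (i,j) * x $ j * cnj (y $ i))"
    by (rule sum.swap)
  also have "\<dots> = x \<bullet>c (cadj M *\<^sub>v y)"
    using assms by (simp add: scalar_prod_def cnj_sum sum_distrib_left mult.commute mult.left_commute)
  finally show ?thesis .
qed

definition unitary_mat :: "nat \<Rightarrow> complex mat \<Rightarrow> bool" where
  "unitary_mat n U \<longleftrightarrow> U \<in> carrier_mat n n \<and> cadj U * U = 1\<^sub>m n"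

lemma unitary_matD:
  assumes "unitary_mat n U"
  shows "U \<in> carrier_mat n n" "cadj U * U = 1\<^sub>m n" "U * cadj U = 1\<^sub>m n"
  using assms mat_mult_left_right_inverse[of "cadj U" n U] unfolding unitary_mat_def by auto

lemma unitary_mat_mult:
  assumes U: "unitary_mat n U" and V: "unitary_mat n V"
  shows "unitary_mat n (U * V)"
proof -
  note UD = unitary_matD[OF U] and VD = unitary_matD[OF V]
  have "cadj (U * V) * (U * V) = cadj V * (cadj U * (U * V))"
    using UD VD by (simp add: cadj_mult[of _ n n _ n] assoc_mult_mat[of _ n n _ n _ n])
  also have "cadj U * (U * V) = (cadj U * U) * V"
    using UD VD by (intro assoc_mult_mat[symmetric]) auto
  finally have "cadj (U * V) * (U * V) = 1\<^sub>m n" using UD VD by simp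
  then show ?thesis using UD VD unfolding unitary_mat_def by simp
qed

lemma unitary_mat_cadj_mult_vec:
  assumes "unitary_mat n U" "y \<in> carrier_vec n"
  shows "cadj U *\<^sub>v (U *\<^sub>v y) = y"
  using unitary_matD[OF assms(1)] assms(2)
  by (simp add: assoc_mult_mat_vec[of _ n n _ n, symmetric])

lemma unitary_mat_mult_cadj_vec:
  assumes "unitary_mat n U" "y \<in> carrier_vec n"
  shows "U *\<^sub>v (cadj U *\<^sub>v y) = y"
  using unitary_matD[OF assms(1)] assms(2)
  by (simp add: assoc_mult_mat_vec[of _ n n _ n, symmetric])

lemma unitary_mat_cinner:
  assumes U: "unitary_mat n U" and x: "x \<in> carrier_vec n" and y: "y \<in> carrier_vec n"
  shows "(U *\<^sub>v x) \<bullet>c (U *\<^sub>v y) = x \<bullet>c y"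
  using cinner_mult_mat_vec_cadj[of U n n x "U *\<^sub>v y"] unitary_matD[OF U] x y
    unitary_mat_cadj_mult_vec[OF U y] by simp

lemma cinner_self_real:
  fixes w :: "complex vec"
  shows "w \<bullet>c w = complex_of_real (Re (w \<bullet>c w))" "Re (w \<bullet>c w) \<ge> 0"
proof -
  have "0 \<le> w \<bullet>c w" by (rule conjugate_square_ge_0_vec)
  then show "w \<bullet>c w = complex_of_real (Re (w \<bullet>c w))" "Re (w \<bullet>c w) \<ge> 0"
    by (auto simp: less_eq_complex_def complex_eq_iff)
qed

lemma cinner_smult:
  assumes "x \<in> carrier_vec n" "y \<in> carrier_vec n"
  shows "(a \<cdot>\<^sub>v x) \<bullet>c (b \<cdot>\<^sub>v y) = a * cnj b * (x \<bullet>c y)"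
  using assms by (simp add: scalar_prod_def sum_distrib_left algebra_simps)

lemma vec_nonzero_index:
  assumes "v \<in> carrier_vec k" "v \<noteq> 0\<^sub>v k"
  obtains j where "j < k" "v $ j \<noteq> 0"
  using assms by (metis eq_vecI carrier_vecD index_zero_vec)

lemma vnorm2_square: "(vnorm2 v)\<^sup>2 = (\<Sum>i<dim_vec v. (cmod (v $ i))\<^sup>2)"
  unfolding vnorm2_def by (simp add: sum_nonneg)

lemma vnorm2_square_cinner: "(vnorm2 v)\<^sup>2 = Re (v \<bullet>c v)"
proof -
  have "Re (v \<bullet>c v) = (\<Sum>i<dim_vec v. Re (v $ i * cnj (v $ i)))"
    by (simp add: scalar_prod_def atLeast0LessThan Re_sum)
  also have "\<dots> = (\<Sum>i<dim_vec v. (cmod (v $ i))\<^sup>2)"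
    by (simp add: complex_norm_square[symmetric] del: of_real_power)
  finally show ?thesis by (simp add: vnorm2_square)
qed

lemma vnorm2_nonneg: "vnorm2 v \<ge> 0"
  unfolding vnorm2_def by (simp add: sum_nonneg)

lemma vnorm2_smult: "vnorm2 (s \<cdot>\<^sub>v v) = cmod s * vnorm2 v"
proof -
  have "(\<Sum>i<dim_vec v. (cmod (s * v $ i))\<^sup>2) = (cmod s)\<^sup>2 * (\<Sum>i<dim_vec v. (cmod (v $ i))\<^sup>2)"
    by (simp add: sum_distrib_left norm_mult power_mult_distrib)
  then show ?thesis unfolding vnorm2_def by (simp add: real_sqrt_mult)
qed

lemma vnorm2_uminus: "vnorm2 (- v) = vnorm2 v"
  unfolding vnorm2_def by simp

lemma vnorm2_unitary_mult:
  assumes "unitary_mat n U" "y \<in> carrier_vec n"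
  shows "vnorm2 (U *\<^sub>v y) = vnorm2 y"
  using unitary_mat_cinner[OF assms assms(2)] vnorm2_square_cinner[of y]
    vnorm2_square_cinner[of "U *\<^sub>v y"] vnorm2_nonneg[of y] vnorm2_nonneg[of "U *\<^sub>v y"]
  by (metis power2_eq_imp_eq)

lemma vnorm2_pos:
  assumes "v \<in> carrier_vec k" "v \<noteq> 0\<^sub>v k"
  shows "vnorm2 v > 0"
proof -
  obtain j where j: "j < k" "v $ j \<noteq> 0" using vec_nonzero_index[OF assms] .
  have "0 < (\<Sum>i<k. (cmod (v $ i))\<^sup>2)" using j by (intro sum_pos2[of _ j]) auto
  then show ?thesis using assms(1) unfolding vnorm2_def by simp
qed

definition normalize_vec :: "complex vec \<Rightarrow> complex vec" where
  "normalize_vec w = (1 / complex_of_real (vnorm2 w)) \<cdot>\<^sub>v w"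

lemma normalize_vec_carrier [simp]: "w \<in> carrier_vec n \<Longrightarrow> normalize_vec w \<in> carrier_vec n"
  by (simp add: normalize_vec_def)

lemma normalize_vec_cinner:
  assumes "x \<in> carrier_vec n" "y \<in> carrier_vec n"
  shows "normalize_vec x \<bullet>c normalize_vec y = (x \<bullet>c y) / complex_of_real (vnorm2 x * vnorm2 y)"
  unfolding normalize_vec_def cinner_smult[OF assms] by simp

lemma normalize_vec_unit:
  assumes "w \<in> carrier_vec n" "w \<noteq> 0\<^sub>v n"
  shows "normalize_vec w \<bullet>c normalize_vec w = 1"
proof -
  have pos: "vnorm2 w > 0" by (rule vnorm2_pos[OF assms])
  have "w \<bullet>c w = complex_of_real ((vnorm2 w)\<^sup>2)"
    using cinner_self_real(1)[of w] by (simp add: vnorm2_square_cinner)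
  then show ?thesis using pos unfolding normalize_vec_cinner[OF assms(1) assms(1)]
    by (simp add: power2_eq_square)
qed

lemma normalize_vec_unit_id:
  assumes "w \<bullet>c w = 1"
  shows "normalize_vec w = w"
proof -
  have "(vnorm2 w)\<^sup>2 = 1" using assms by (simp add: vnorm2_square_cinner)
  then have "vnorm2 w = 1" using vnorm2_nonneg[of w] by (simp add: power2_eq_1_iff)
  then show ?thesis unfolding normalize_vec_def by simp
qed

lemma spec_norm_upper:
  assumes M: "M \<in> carrier_mat r c" and x: "x \<in> carrier_vec c" and x1: "vnorm2 x = 1"
  shows "vnorm2 (M *\<^sub>v x) \<le> spec_norm M"
  unfolding spec_norm_def
proof (rule cSup_upper)
  define S where "S = (\<Sum>i<r. (\<Sum>j<c. cmod (M $$ (i,j)))\<^sup>2)"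
  have bound: "vnorm2 (M *\<^sub>v z) \<le> sqrt S" if z: "z \<in> carrier_vec c" "vnorm2 z = 1" for z
  proof -
    have zj: "cmod (z $ j) \<le> 1" if "j < c" for j
    proof -
      have "(cmod (z $ j))\<^sup>2 \<le> (vnorm2 z)\<^sup>2"
        unfolding vnorm2_square using that z by (intro member_le_sum) auto
      then show ?thesis using z abs_square_le_1[of "cmod (z $ j)"] by simp
    qed
    have "cmod ((M *\<^sub>v z) $ i) \<le> (\<Sum>j<c. cmod (M $$ (i,j)))" if i: "i < r" for i
    proof -
      have "cmod ((M *\<^sub>v z) $ i) = cmod (\<Sum>j<c. M $$ (i,j) * z $ j)"
        using M z i by (simp add: scalar_prod_def atLeast0LessThan)
      also have "\<dots> \<le> (\<Sum>j<c. cmod (M $$ (i,j) * z $ j))" by (rule norm_sum)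
      also have "\<dots> \<le> (\<Sum>j<c. cmod (M $$ (i,j)))"
        by (rule sum_mono) (use zj in \<open>auto simp: norm_mult intro: mult_left_le\<close>)
      finally show ?thesis .
    qed
    then have "(\<Sum>i<r. (cmod ((M *\<^sub>v z) $ i))\<^sup>2) \<le> S"
      unfolding S_def by (intro sum_mono power_mono) auto
    then show ?thesis unfolding vnorm2_def using M by simp
  qed
  then show "bdd_above {vnorm2 (M *\<^sub>v x) |x. x \<in> carrier_vec (dim_col M) \<and> vnorm2 x = 1}"
    using M by (intro bdd_aboveI[of _ "sqrt S"]) auto
  show "vnorm2 (M *\<^sub>v x) \<in> {vnorm2 (M *\<^sub>v x) |x. x \<in> carrier_vec (dim_col M) \<and> vnorm2 x = 1}"
    using M x x1 by auto
qed

lemma spec_norm_mult_vec_le: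
  assumes M: "M \<in> carrier_mat r c" and x: "x \<in> carrier_vec c"
  shows "vnorm2 (M *\<^sub>v x) \<le> spec_norm M * vnorm2 x"
proof (cases "vnorm2 x = 0")
  case True
  then have "x = 0\<^sub>v c" using x vnorm2_pos[OF x] by fastforce
  then show ?thesis using M True by (simp add: vnorm2_def)
next
  case False
  then have pos: "vnorm2 x > 0" using vnorm2_nonneg[of x] by simp
  define s where "s = complex_of_real (1 / vnorm2 x)"
  have "vnorm2 (s \<cdot>\<^sub>v x) = 1" unfolding vnorm2_smult s_def using pos by (simp add: norm_divide)
  from spec_norm_upper[OF M _ this] x have "vnorm2 (M *\<^sub>v (s \<cdot>\<^sub>v x)) \<le> spec_norm M" by simp
  also have "M *\<^sub>v (s \<cdot>\<^sub>v x) = s \<cdot>\<^sub>v (M *\<^sub>v x)" by (rule mult_mat_vec[OF M x])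
  finally have "vnorm2 (M *\<^sub>v x) / vnorm2 x \<le> spec_norm M"
    unfolding vnorm2_smult s_def using pos by (simp add: norm_divide)
  then show ?thesis using pos by (simp add: field_simps)
qed

subsection \<open>Unitary diagonalisation of Hermitian matrices\<close>

lemma unitary_mat_of_cols:
  assumes len: "length ws = n" and ws: "set ws \<subseteq> carrier_vec n"
    and orth: "\<And>i j. i < n \<Longrightarrow> j < n \<Longrightarrow> ws ! j \<bullet>c ws ! i = (if i = j then 1 else 0)"
  shows "unitary_mat n (mat_of_cols n ws)"
proof -
  define W where "W = mat_of_cols n ws"
  have W: "W \<in> carrier_mat n n" unfolding W_def using mat_of_cols_carrier(1)[of n ws] len by simp
  have col: "col W i = ws ! i" if "i < n" for i
    unfolding W_def using len ws that by (intro col_mat_of_cols) auto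
  have "cadj W * W = 1\<^sub>m n"
  proof (rule eq_matI)
    fix i j assume "i < dim_row (1\<^sub>m n)" "j < dim_col (1\<^sub>m n)"
    then have i: "i < n" and j: "j < n" by auto
    have "(cadj W * W) $$ (i,j) = col W j \<bullet>c col W i"
      using W i j by (simp add: scalar_prod_def mult.commute)
    then show "(cadj W * W) $$ (i,j) = 1\<^sub>m n $$ (i,j)"
      using orth[OF i j] col[OF i] col[OF j] i j by simp
  qed (use W in auto)
  then show ?thesis using W unfolding unitary_mat_def W_def by simp
qed

lemma unitary_completion:
  assumes v: "v \<in> carrier_vec n" and vv: "v \<bullet>c v = 1"
  obtains W where "unitary_mat n W" "col W 0 = v"
proof -
  have v0: "v \<noteq> 0\<^sub>v n" using vv v by auto
  have n: "n \<noteq> 0" using v v0 by (intro notI) (auto intro: eq_vecI)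
  interpret cof_vec_space n "TYPE(complex)" .
  define b where "b = basis_completion v"
  from basis_completion[OF v v0, folded b_def]
  have b: "set b \<subseteq> carrier_vec n" "distinct b" "\<not> lin_dep (set b)" "hd b = v" "length b = n"
    by auto
  then obtain vs where bv: "b = v # vs" using n by (cases b) auto
  define ws where "ws = gram_schmidt n b"
  from gram_schmidt_result[OF b(1-3) refl, folded ws_def]
  have ws: "set ws \<subseteq> carrier_vec n" "corthogonal ws" "length ws = n"
    using b(5) by auto
  have "hd ws = v" unfolding ws_def bv using v by simp
  then have ws0: "ws ! 0 = v" using n ws(3) by (cases ws) auto
  have wsc: "ws ! i \<in> carrier_vec n" if "i < n" for i using ws that by auto
  have ws_nz: "ws ! i \<noteq> 0\<^sub>v n" if "i < n" for i
    using corthogonalD[OF ws(2), of i i] ws(3) that by auto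
  define ws' where "ws' = map normalize_vec ws"
  have orth: "ws' ! j \<bullet>c ws' ! i = (if i = j then 1 else 0)" if i: "i < n" and j: "j < n" for i j
  proof (cases "i = j")
    case True
    then show ?thesis using normalize_vec_unit[OF wsc ws_nz, OF i] i ws(3) unfolding ws'_def by simp
  next
    case False
    then have "ws ! j \<bullet>c ws ! i = 0" using corthogonalD[OF ws(2)] i j ws(3) by auto
    then show ?thesis using False i j ws(3) normalize_vec_cinner[OF wsc[OF j] wsc[OF i]]
      unfolding ws'_def by simp
  qed
  have "unitary_mat n (mat_of_cols n ws')"
    using orth ws unfolding ws'_def by (intro unitary_mat_of_cols) auto
  moreover have "col (mat_of_cols n ws') 0 = v"
    using n ws ws0 normalize_vec_unit_id[OF vv] unfolding ws'_def
    by (subst col_mat_of_cols) auto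
  ultimately show ?thesis by (rule that)
qed

lemma exists_unit_eigenvector:
  fixes A :: "complex mat"
  assumes A: "A \<in> carrier_mat (Suc k) (Suc k)"
  obtains e v where "v \<in> carrier_vec (Suc k)" "v \<bullet>c v = 1" "A *\<^sub>v v = e \<cdot>\<^sub>v v"
proof -
  obtain es where cp: "char_poly A = (\<Prod>a\<leftarrow>es. [:- a, 1:])" and "length es = Suc k"
    using char_poly_factorized[OF A] by auto
  then obtain e es' where "es = e # es'" by (cases es) auto
  then have "poly (char_poly A) e = 0" unfolding cp by simp
  then have "eigenvalue A e" using eigenvalue_root_char_poly[OF A] by simp
  then have w: "find_eigenvector A e \<in> carrier_vec (Suc k)" "find_eigenvector A e \<noteq> 0\<^sub>v (Suc k)"
    "A *\<^sub>v find_eigenvector A e = e \<cdot>\<^sub>v find_eigenvector A e"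
    using find_eigenvector[OF A] A unfolding eigenvector_def by auto
  define v where "v = normalize_vec (find_eigenvector A e)"
  have "A *\<^sub>v v = e \<cdot>\<^sub>v v"
    unfolding v_def normalize_vec_def using w A
    by (simp add: mult_mat_vec[OF A w(1)] smult_smult_assoc mult.commute)
  moreover have "v \<in> carrier_vec (Suc k)" "v \<bullet>c v = 1"
    unfolding v_def using w by (auto intro: normalize_vec_unit)
  ultimately show ?thesis using that by blast
qed

lemma hermitian_block_split:
  assumes A: "A \<in> carrier_mat (Suc k) (Suc k)" and herm: "cadj A = A"
    and col0: "col A 0 = e \<cdot>\<^sub>v unit_vec (Suc k) 0"
  obtains A3 where "A3 \<in> carrier_mat k k" "cadj A3 = A3"
    "A = four_block_mat (mat 1 1 (\<lambda>_. e)) (0\<^sub>m 1 k) (0\<^sub>m k 1) A3"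
proof -
  define A3 where "A3 = mat k k (\<lambda>(i,j). A $$ (Suc i, Suc j))"
  have first_col: "A $$ (i,0) = (if i = 0 then e else 0)" if "i < Suc k" for i
    using arg_cong[OF col0, of "\<lambda>w. w $ i"] A that by simp
  have A_cnj: "A $$ (i,j) = cnj (A $$ (j,i))" if "i < Suc k" "j < Suc k" for i j
    using arg_cong[OF herm, of "\<lambda>M. M $$ (i,j)"] A that by simp
  have e_real: "cnj e = e"
    using A_cnj[of 0 0] first_col[of 0] by simp
  have first_row: "A $$ (0,j) = (if j = 0 then e else 0)" if "j < Suc k" for j
  proof -
    have "A $$ (0,j) = cnj (A $$ (j,0))" using A_cnj[of 0 j] that by simp
    then show ?thesis using first_col[OF that] e_real by simp
  qed
  have "A = four_block_mat (mat 1 1 (\<lambda>_. e)) (0\<^sub>m 1 k) (0\<^sub>m k 1) A3"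
  proof (rule eq_matI)
    fix i j assume "i < dim_row (four_block_mat (mat 1 1 (\<lambda>_. e)) (0\<^sub>m 1 k) (0\<^sub>m k 1) A3)"
      "j < dim_col (four_block_mat (mat 1 1 (\<lambda>_. e)) (0\<^sub>m 1 k) (0\<^sub>m k 1) A3)"
    then have "i < Suc k" "j < Suc k" by (simp_all add: A3_def)
    then show "A $$ (i,j) = four_block_mat (mat 1 1 (\<lambda>_. e)) (0\<^sub>m 1 k) (0\<^sub>m k 1) A3 $$ (i,j)"
      using first_col first_row by (cases i; cases j) (auto simp: A3_def)
  qed (use A in \<open>auto simp: A3_def\<close>)
  moreover have "cadj A3 = A3"
  proof (rule eq_matI)
    fix i j assume "i < dim_row A3" "j < dim_col A3"
    then show "cadj A3 $$ (i,j) = A3 $$ (i,j)"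
      using A_cnj[of "Suc i" "Suc j"] by (simp add: A3_def)
  qed (simp_all add: A3_def)
  moreover have "A3 \<in> carrier_mat k k" by (simp add: A3_def)
  ultimately show ?thesis using that by blast
qed

lemma hermitian_deflation:
  assumes A: "A \<in> carrier_mat (Suc k) (Suc k)" and herm: "cadj A = A"
  obtains W e A3 where "unitary_mat (Suc k) W" "A3 \<in> carrier_mat k k" "cadj A3 = A3"
    "cadj W * A * W = four_block_mat (mat 1 1 (\<lambda>_. e)) (0\<^sub>m 1 k) (0\<^sub>m k 1) A3"
proof -
  let ?n = "Suc k"
  obtain e v where v: "v \<in> carrier_vec ?n" "v \<bullet>c v = 1" and Av: "A *\<^sub>v v = e \<cdot>\<^sub>v v"
    using exists_unit_eigenvector[OF A] .
  obtain W where W: "unitary_mat ?n W" and colW: "col W 0 = v"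
    using unitary_completion[OF v] .
  note WD = unitary_matD[OF W]
  define A' where "A' = cadj W * A * W"
  have A': "A' \<in> carrier_mat ?n ?n" unfolding A'_def using WD A by auto
  have "cadj A' = A'"
    unfolding A'_def using WD A herm
    by (simp add: cadj_mult[of _ ?n ?n _ ?n] assoc_mult_mat[of _ ?n ?n _ ?n _ ?n])
  moreover have "col A' 0 = e \<cdot>\<^sub>v unit_vec ?n 0"
  proof -
    have "col A' 0 = (cadj W * A) *\<^sub>v col W 0"
      unfolding A'_def using WD A by (intro col_mult2[of _ ?n ?n]) auto
    also have "\<dots> = cadj W *\<^sub>v (A *\<^sub>v col W 0)"
      using WD A v colW by (intro assoc_mult_mat_vec[of _ ?n ?n _ ?n]) auto
    also have "\<dots> = e \<cdot>\<^sub>v (cadj W *\<^sub>v col W 0)"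
      unfolding colW Av using WD v by (intro mult_mat_vec) auto
    also have "cadj W *\<^sub>v col W 0 = col (cadj W * W) 0"
      using WD by (intro col_mult2[symmetric, of _ ?n ?n]) auto
    finally show ?thesis using WD by simp
  qed
  ultimately obtain A3 where "A3 \<in> carrier_mat k k" "cadj A3 = A3"
    "A' = four_block_mat (mat 1 1 (\<lambda>_. e)) (0\<^sub>m 1 k) (0\<^sub>m k 1) A3"
    using hermitian_block_split[OF A'] by blast
  then show ?thesis using that W unfolding A'_def by blast
qed

lemma unitary_conj_cancel:
  assumes W: "unitary_mat n W" and A: "A \<in> carrier_mat n n"
  shows "W * (cadj W * A * W) * cadj W = A"
proof -
  note WD = unitary_matD[OF W]
  have "W * (cadj W * A * W) * cadj W = (W * cadj W) * A * (W * cadj W)"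
    using WD(1) A by (simp add: assoc_mult_mat[of _ n n _ n _ n] mult_carrier_mat[of _ n n])
  then show ?thesis unfolding WD(3) using A by simp
qed

lemma unitary_block_conj:
  assumes U3: "unitary_mat k U3" and D3: "D3 \<in> carrier_mat k k" and E: "E \<in> carrier_mat 1 1"
  defines "B \<equiv> four_block_mat (1\<^sub>m 1) (0\<^sub>m 1 k) (0\<^sub>m k 1) U3"
  shows "unitary_mat (Suc k) B"
    and "B * four_block_mat E (0\<^sub>m 1 k) (0\<^sub>m k 1) D3 * cadj B
      = four_block_mat E (0\<^sub>m 1 k) (0\<^sub>m k 1) (U3 * D3 * cadj U3)"
proof -
  note UD = unitary_matD[OF U3]
  have cB: "cadj B = four_block_mat (1\<^sub>m 1) (0\<^sub>m 1 k) (0\<^sub>m k 1) (cadj U3)"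
    unfolding B_def using UD by (subst cadj_four_block_mat[of _ 1 1 _ k _ k]) auto
  have "B \<in> carrier_mat (Suc k) (Suc k)"
    unfolding B_def using UD four_block_carrier_mat[of "1\<^sub>m 1" 1 1 U3 k] by simp
  moreover have "cadj B * B = 1\<^sub>m (Suc k)"
    unfolding cB unfolding B_def using UD by (subst mult_four_block_mat[of _ 1 1 _ k _ k]) auto
  ultimately show "unitary_mat (Suc k) B" unfolding unitary_mat_def by simp
  have "B * four_block_mat E (0\<^sub>m 1 k) (0\<^sub>m k 1) D3 = four_block_mat E (0\<^sub>m 1 k) (0\<^sub>m k 1) (U3 * D3)"
    unfolding B_def using UD D3 E by (subst mult_four_block_mat[of _ 1 1 _ k _ k]) auto
  moreover have "four_block_mat E (0\<^sub>m 1 k) (0\<^sub>m k 1) (U3 * D3) * cadj B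
      = four_block_mat E (0\<^sub>m 1 k) (0\<^sub>m k 1) (U3 * D3 * cadj U3)"
    unfolding cB using UD D3 E by (subst mult_four_block_mat[of _ 1 1 _ k _ k]) auto
  ultimately show "B * four_block_mat E (0\<^sub>m 1 k) (0\<^sub>m k 1) D3 * cadj B
      = four_block_mat E (0\<^sub>m 1 k) (0\<^sub>m k 1) (U3 * D3 * cadj U3)"
    by simp
qed

theorem hermitian_unitary_diagonalization:
  assumes "A \<in> carrier_mat n n" "cadj A = A"
  shows "\<exists>U Dg. unitary_mat n U \<and> Dg \<in> carrier_mat n n \<and> diagonal_mat Dg \<and> A = U * Dg * cadj U"
  using assms
proof (induction n arbitrary: A)
  case 0
  then have "A = 1\<^sub>m 0 * A * cadj (1\<^sub>m 0)" "diagonal_mat A" "unitary_mat 0 (1\<^sub>m 0)"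
    by (auto simp: diagonal_mat_def unitary_mat_def)
  then show ?case using 0 by blast
next
  case (Suc k A)
  obtain W e A3 where W: "unitary_mat (Suc k) W" and A3: "A3 \<in> carrier_mat k k" "cadj A3 = A3"
    and WAW: "cadj W * A * W = four_block_mat (mat 1 1 (\<lambda>_. e)) (0\<^sub>m 1 k) (0\<^sub>m k 1) A3"
    using hermitian_deflation[OF Suc.prems] .
  obtain U3 D3 where U3: "unitary_mat k U3" and D3: "D3 \<in> carrier_mat k k" "diagonal_mat D3"
    and A3_eq: "A3 = U3 * D3 * cadj U3"
    using Suc.IH[OF A3] by blast
  define E :: "complex mat" where "E = mat 1 1 (\<lambda>_. e)"
  define B where "B = four_block_mat (1\<^sub>m 1) (0\<^sub>m 1 k) (0\<^sub>m k 1) U3"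
  define D where "D = four_block_mat E (0\<^sub>m 1 k) (0\<^sub>m k 1) D3"
  have E: "E \<in> carrier_mat 1 1" unfolding E_def by simp
  note blk = unitary_block_conj[OF U3 D3(1) E, folded B_def]
  have B: "B \<in> carrier_mat (Suc k) (Suc k)" using unitary_matD[OF blk(1)] by simp
  have Dc: "D \<in> carrier_mat (Suc k) (Suc k)"
    unfolding D_def using four_block_carrier_mat[OF E D3(1)] by simp
  have "diagonal_mat D"
    using D3 E unfolding D_def E_def diagonal_mat_def by auto
  moreover have "unitary_mat (Suc k) (W * B)" by (rule unitary_mat_mult[OF W blk(1)])
  moreover have "A = (W * B) * D * cadj (W * B)"
  proof -
    have "A = W * (cadj W * A * W) * cadj W"
      using unitary_conj_cancel[OF W Suc.prems(1)] by simp
    also have "cadj W * A * W = B * D * cadj B"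
      unfolding WAW A3_eq D_def blk(2) unfolding E_def ..
    also have "W * (B * D * cadj B) * cadj W = (W * B) * D * cadj (W * B)"
      using unitary_matD(1)[OF W] B Dc
      by (simp add: cadj_mult[of _ "Suc k" "Suc k" _ "Suc k"] mult_carrier_mat[of _ "Suc k" "Suc k"]
          assoc_mult_mat[of _ "Suc k" "Suc k" _ "Suc k" _ "Suc k"])
    finally show ?thesis .
  qed
  ultimately show ?case using Dc by blast
qed

subsection \<open>Singular values\<close>

lemma diagonal_mat_mult_vec:
  assumes Dg: "Dg \<in> carrier_mat N N" "diagonal_mat Dg" and y: "y \<in> carrier_vec N" and i: "i < N"
  shows "(Dg *\<^sub>v y) $ i = Dg $$ (i,i) * y $ i"
proof -
  have "(Dg *\<^sub>v y) $ i = (\<Sum>j\<in>{0..<N}. Dg $$ (i,j) * y $ j)"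
    using Dg y i by (simp add: scalar_prod_def)
  also have "\<dots> = (\<Sum>j\<in>{0..<N}. if j = i then Dg $$ (i,i) * y $ j else 0)"
    using Dg i unfolding diagonal_mat_def by (intro sum.cong) auto
  finally show ?thesis using i by simp
qed

lemma diagonal_mat_cinner:
  assumes Dg: "Dg \<in> carrier_mat N N" "diagonal_mat Dg" and y: "y \<in> carrier_vec N"
  shows "y \<bullet>c (Dg *\<^sub>v y) = (\<Sum>i<N. cnj (Dg $$ (i,i)) * complex_of_real ((cmod (y $ i))\<^sup>2))"
  using Dg y
  by (simp add: scalar_prod_def atLeast0LessThan diagonal_mat_mult_vec complex_norm_square
      del: index_mult_mat_vec of_real_power) (simp add: ac_simps)

lemma proots_prod_linear_factors: "proots (\<Prod>a\<leftarrow>xs. [:- a, 1:]) = mset (xs :: complex list)"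
proof (induction xs)
  case (Cons a xs)
  have "(\<Prod>a\<leftarrow>xs. [:- a, 1:]) \<noteq> (0 :: complex poly)"
    by (auto simp: prod_list_zero_iff)
  then have "proots ([:- a, 1:] * (\<Prod>x\<leftarrow>xs. [:- x, 1:])) = proots [:- a, 1:] + proots (\<Prod>x\<leftarrow>xs. [:- x, 1:])"
    by (intro proots_mult) auto
  then show ?case using Cons.IH by (simp only: list.map prod_list.Cons) simp
qed simp

lemma gram_unitary_diagonalization:
  fixes F :: "complex mat"
  assumes F: "F \<in> carrier_mat r N"
  obtains U d where "unitary_mat N U" "\<And>i. i < N \<Longrightarrow> d i \<ge> 0"
    "sing_vals F = rev (sort (map (\<lambda>i. sqrt (d i)) [0..<N]))"
    "\<And>y. y \<in> carrier_vec N \<Longrightarrow> (vnorm2 (F *\<^sub>v (U *\<^sub>v y)))\<^sup>2 = (\<Sum>i<N. d i * (cmod (y $ i))\<^sup>2)"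
proof -
  define H where "H = cadj F * F"
  have H: "H \<in> carrier_mat N N" "cadj H = H"
    unfolding H_def using F by (auto simp: cadj_mult[of _ N r _ N])
  obtain U Dg where U: "unitary_mat N U" and Dg: "Dg \<in> carrier_mat N N" "diagonal_mat Dg"
    and H_eq: "H = U * Dg * cadj U"
    using hermitian_unitary_diagonalization[OF H] by blast
  note UD = unitary_matD[OF U]
  have quad: "(F *\<^sub>v (U *\<^sub>v y)) \<bullet>c (F *\<^sub>v (U *\<^sub>v y)) = y \<bullet>c (Dg *\<^sub>v y)"
    if y: "y \<in> carrier_vec N" for y
  proof -
    have Uy: "U *\<^sub>v y \<in> carrier_vec N" using UD y by simp
    have "H *\<^sub>v (U *\<^sub>v y) = (U * Dg) *\<^sub>v (cadj U *\<^sub>v (U *\<^sub>v y))"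
      unfolding H_eq by (rule assoc_mult_mat_vec[OF mult_carrier_mat[OF UD(1) Dg(1)] cadj_carrier[OF UD(1)] Uy])
    also have "\<dots> = U *\<^sub>v (Dg *\<^sub>v y)"
      unfolding unitary_mat_cadj_mult_vec[OF U y] by (rule assoc_mult_mat_vec[OF UD(1) Dg(1) y])
    finally have HUy: "H *\<^sub>v (U *\<^sub>v y) = U *\<^sub>v (Dg *\<^sub>v y)" .
    have "(F *\<^sub>v (U *\<^sub>v y)) \<bullet>c (F *\<^sub>v (U *\<^sub>v y)) = (U *\<^sub>v y) \<bullet>c (H *\<^sub>v (U *\<^sub>v y))"
      using cinner_mult_mat_vec_cadj[OF F Uy, of "F *\<^sub>v (U *\<^sub>v y)"] F Uy
      by (simp add: H_def assoc_mult_mat_vec[of _ N r _ N])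
    also have "\<dots> = y \<bullet>c (Dg *\<^sub>v y)"
      unfolding HUy using unitary_mat_cinner[OF U y, of "Dg *\<^sub>v y"] Dg y by simp
    finally show ?thesis .
  qed
  \<comment> \<open>\<open>d i = \<parallel>F u\<^sub>i\<parallel>\<^sup>2\<close> for the \<open>i\<close>-th column \<open>u\<^sub>i\<close> of \<open>U\<close>; this shows the diagonal of \<open>Dg\<close> real and nonnegative.\<close>
  define d where "d i = (vnorm2 (F *\<^sub>v (U *\<^sub>v unit_vec N i)))\<^sup>2" for i
  have Dg_diag: "Dg $$ (i,i) = complex_of_real (d i)" if i: "i < N" for i
  proof -
    have "unit_vec N i \<bullet>c (Dg *\<^sub>v unit_vec N i) = (\<Sum>j<N. if j = i then cnj (Dg $$ (i,i)) else 0)"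
      unfolding diagonal_mat_cinner[OF Dg unit_vec_carrier] using i by (intro sum.cong) auto
    then have "unit_vec N i \<bullet>c (Dg *\<^sub>v unit_vec N i) = cnj (Dg $$ (i,i))"
      using i by simp
    moreover have "complex_of_real (d i) = (F *\<^sub>v (U *\<^sub>v unit_vec N i)) \<bullet>c (F *\<^sub>v (U *\<^sub>v unit_vec N i))"
      unfolding d_def vnorm2_square_cinner by (rule cinner_self_real(1)[symmetric])
    ultimately have "cnj (Dg $$ (i,i)) = complex_of_real (d i)"
      using quad[OF unit_vec_carrier, of i] by simp
    then show ?thesis by (metis complex_cnj_cnj complex_cnj_complex_of_real)
  qed
  have "(vnorm2 (F *\<^sub>v (U *\<^sub>v y)))\<^sup>2 = (\<Sum>i<N. d i * (cmod (y $ i))\<^sup>2)"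
    if y: "y \<in> carrier_vec N" for y
    unfolding vnorm2_square_cinner quad[OF y] diagonal_mat_cinner[OF Dg y]
    by (simp add: Dg_diag Re_sum flip: of_real_mult)
  moreover have "sing_vals F = rev (sort (map (\<lambda>i. sqrt (d i)) [0..<N]))"
  proof -
    have "similar_mat H Dg"
      using H(1) Dg(1) UD by (intro similar_matI[of H Dg U "cadj U" N]) (auto simp: H_eq)
    moreover have "upper_triangular Dg"
      using Dg unfolding diagonal_mat_def upper_triangular_def by auto
    ultimately have "char_poly H = (\<Prod>a\<leftarrow>diag_mat Dg. [:- a, 1:])"
      using char_poly_upper_triangular[OF Dg(1)] char_poly_similar by metis
    moreover have "map (\<lambda>z. sqrt (Re z)) (diag_mat Dg) = map (\<lambda>i. sqrt (d i)) [0..<N]"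
      using Dg(1) by (simp add: diag_mat_def Dg_diag)
    ultimately show ?thesis
      unfolding sing_vals_def H_def[symmetric]
      by (simp add: proots_prod_linear_factors flip: mset_map)
  qed
  moreover have "d i \<ge> 0" for i unfolding d_def by simp
  ultimately show ?thesis using that U by blast
qed

lemma all_but_one_gt_if_second_smallest_gt:
  fixes L :: "real list"
  assumes len: "length L = N" and N: "2 \<le> N" and gt: "c < sort L ! 1"
  obtains k where "k < N" "\<And>i. i < N \<Longrightarrow> i \<noteq> k \<Longrightarrow> c < L ! i"
proof -
  have "length (sort L) = N" using len by simp
  then obtain s0 t where St: "sort L = s0 # t" using N by (cases "sort L") auto
  have sorted: "sorted (s0 # t)" using St sorted_sort[of L] by metis
  have "\<forall>x\<in>set t. c < x"
  proof
    fix x assume "x \<in> set t"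
    then obtain j where j: "j < length t" and x: "x = t ! j" by (auto simp: in_set_conv_nth)
    have "(s0 # t) ! 1 \<le> (s0 # t) ! Suc j"
      using j by (intro sorted_nth_mono[OF sorted]) auto
    then show "c < x" using gt x St by simp
  qed
  then have "filter (\<lambda>x. x \<le> c) t = []"
    by (simp add: filter_empty_conv not_le)
  then have "length (filter (\<lambda>x. x \<le> c) (sort L)) \<le> 1"
    unfolding St by simp
  then have "length (filter (\<lambda>x. x \<le> c) L) \<le> 1"
    by (simp add: filter_sort)
  then have card: "card {i. i < N \<and> L ! i \<le> c} \<le> 1"
    using len by (simp add: length_filter_conv_card)
  show ?thesis
  proof (cases "\<exists>k<N. L ! k \<le> c")
    case True
    then obtain k where k: "k < N" "L ! k \<le> c" by blast
    have "c < L ! i" if "i < N" "i \<noteq> k" for i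
    proof (rule ccontr)
      assume "\<not> c < L ! i"
      then have "{i, k} \<subseteq> {i. i < N \<and> L ! i \<le> c}" using that k by auto
      from card_mono[OF _ this] card that show False by auto
    qed
    with k(1) show ?thesis by (rule that)
  next
    case False
    then show ?thesis using N that[of 0] by fastforce
  qed
qed

lemma weighted_sum_gt_if_all_but_one_gt:
  fixes d t :: "nat \<Rightarrow> real"
  assumes d: "\<And>i. i < N \<Longrightarrow> i \<noteq> k \<Longrightarrow> c < d i" and t: "\<And>i. 0 \<le> t i"
    and tk: "t k = 0" and j: "j < N" "t j \<noteq> 0"
  shows "c * (\<Sum>i<N. t i) < (\<Sum>i<N. d i * t i)"
  unfolding sum_distrib_left
proof (rule sum_strict_mono_ex1)
  show "\<forall>i\<in>{..<N}. c * t i \<le> d i * t i"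
    using d t tk by (metis le_less lessThan_iff mult_right_mono mult_zero_right)
  have "j \<noteq> k" using j tk by auto
  then show "\<exists>i\<in>{..<N}. c * t i < d i * t i"
    using d[OF j(1)] t[of j] j by (intro bexI[of _ j]) (auto simp: less_le)
qed simp

lemma exists_nonzero_orthogonal_combination:
  fixes a b u :: "complex vec"
  assumes a: "a \<in> carrier_vec n" and b: "b \<in> carrier_vec n" and u: "u \<in> carrier_vec n"
    and indep: "\<And>\<alpha> \<beta>. \<alpha> \<cdot>\<^sub>v a + \<beta> \<cdot>\<^sub>v b = 0\<^sub>v n \<Longrightarrow> \<alpha> = 0 \<and> \<beta> = 0"
  obtains \<alpha> \<beta> where "\<alpha> \<cdot>\<^sub>v a + \<beta> \<cdot>\<^sub>v b \<noteq> 0\<^sub>v n" "(\<alpha> \<cdot>\<^sub>v a + \<beta> \<cdot>\<^sub>v b) \<bullet>c u = 0"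
proof -
  have lin: "(\<alpha> \<cdot>\<^sub>v a + \<beta> \<cdot>\<^sub>v b) \<bullet>c u = \<alpha> * (a \<bullet>c u) + \<beta> * (b \<bullet>c u)" for \<alpha> \<beta>
    using a b u by (simp add: scalar_prod_def sum.distrib sum_distrib_left algebra_simps)
  show ?thesis
  proof (cases "a \<bullet>c u = 0 \<and> b \<bullet>c u = 0")
    case True
    show ?thesis by (rule that[of 1 0]) (use True indep[of 1 0] lin[of 1 0] in auto)
  next
    case False
    then show ?thesis
      using indep[of "b \<bullet>c u" "- (a \<bullet>c u)"] lin[of "b \<bullet>c u" "- (a \<bullet>c u)"] that
      by (auto simp: algebra_simps)
  qed
qed

lemma cadj_mult_vec_index:
  assumes "U \<in> carrier_mat n m" "x \<in> carrier_vec n" "k < m"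
  shows "(cadj U *\<^sub>v x) $ k = x \<bullet>c col U k"
  using assms by (simp add: scalar_prod_def mult.commute)

theorem sval_second_smallest_le:
  fixes F :: "complex mat" and a b :: "complex vec"
  assumes F: "F \<in> carrier_mat r N" and N: "2 \<le> N"
    and a: "a \<in> carrier_vec N" and b: "b \<in> carrier_vec N"
    and indep: "\<And>\<alpha> \<beta>. \<alpha> \<cdot>\<^sub>v a + \<beta> \<cdot>\<^sub>v b = 0\<^sub>v N \<Longrightarrow> \<alpha> = 0 \<and> \<beta> = 0"
    and bound: "\<And>\<alpha> \<beta>. vnorm2 (F *\<^sub>v (\<alpha> \<cdot>\<^sub>v a + \<beta> \<cdot>\<^sub>v b)) \<le> c * vnorm2 (\<alpha> \<cdot>\<^sub>v a + \<beta> \<cdot>\<^sub>v b)"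
  shows "sval (N - 1) F \<le> c"
proof (rule ccontr)
  obtain U d where U: "unitary_mat N U" and d: "\<And>i. i < N \<Longrightarrow> d i \<ge> 0"
    and sv: "sing_vals F = rev (sort (map (\<lambda>i. sqrt (d i)) [0..<N]))"
    and norm_FU: "\<And>y. y \<in> carrier_vec N \<Longrightarrow> (vnorm2 (F *\<^sub>v (U *\<^sub>v y)))\<^sup>2 = (\<Sum>i<N. d i * (cmod (y $ i))\<^sup>2)"
    using gram_unitary_diagonalization[OF F] by blast
  note UD = unitary_matD[OF U]
  define L where "L = map (\<lambda>i. sqrt (d i)) [0..<N]"
  have "sval (N - 1) F = rev (sort L) ! (N - 2)"
    unfolding sval_def sv L_def by (simp add: numeral_2_eq_2)
  also have "\<dots> = sort L ! 1"
    using N by (simp add: rev_nth L_def)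
  finally have sval_eq: "sval (N - 1) F = sort L ! 1" .
  assume "\<not> sval (N - 1) F \<le> c"
  then obtain k where k: "k < N" and gt: "\<And>i. i < N \<Longrightarrow> i \<noteq> k \<Longrightarrow> c < sqrt (d i)"
    using all_but_one_gt_if_second_smallest_gt[of L N c] N unfolding sval_eq L_def by auto
  obtain \<alpha> \<beta> where x0: "\<alpha> \<cdot>\<^sub>v a + \<beta> \<cdot>\<^sub>v b \<noteq> 0\<^sub>v N" and x_orth: "(\<alpha> \<cdot>\<^sub>v a + \<beta> \<cdot>\<^sub>v b) \<bullet>c col U k = 0"
    using exists_nonzero_orthogonal_combination[OF a b _ indep] UD(1) k by (metis col_carrier_vec)
  define x where "x = \<alpha> \<cdot>\<^sub>v a + \<beta> \<cdot>\<^sub>v b"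
  have x: "x \<in> carrier_vec N" unfolding x_def using a b by simp
  define y where "y = cadj U *\<^sub>v x"
  have y: "y \<in> carrier_vec N" unfolding y_def using mult_mat_vec_carrier[OF cadj_carrier[OF UD(1)] x] .
  have x_eq: "x = U *\<^sub>v y" unfolding y_def using unitary_mat_mult_cadj_vec[OF U x] ..
  have yk: "y $ k = 0"
    unfolding y_def cadj_mult_vec_index[OF UD(1) x k] using x_orth by (simp add: x_def)
  have "y \<noteq> 0\<^sub>v N"
  proof
    assume "y = 0\<^sub>v N"
    then have "x = U *\<^sub>v 0\<^sub>v N" using x_eq by simp
    also have "\<dots> = 0\<^sub>v N" using UD(1) by (intro eq_vecI) (auto simp: scalar_prod_def)
    finally show False using x0 unfolding x_def by simp
  qed
  then obtain j where j: "j < N" "y $ j \<noteq> 0" using vec_nonzero_index[OF y] by blast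
  have x_pos: "vnorm2 x > 0" using vnorm2_pos[OF x] x0 unfolding x_def by simp
  have "0 \<le> c * vnorm2 x" using bound[of \<alpha> \<beta>] vnorm2_nonneg[of "F *\<^sub>v x"] unfolding x_def by linarith
  then have c: "c \<ge> 0" using x_pos by (simp add: zero_le_mult_iff)
  have "c\<^sup>2 < d i" if "i < N" "i \<noteq> k" for i
    using power_strict_mono[OF gt[OF that] c, of 2] d[OF that(1)] by simp
  then have "c\<^sup>2 * (\<Sum>i<N. (cmod (y $ i))\<^sup>2) < (\<Sum>i<N. d i * (cmod (y $ i))\<^sup>2)"
    using yk j by (intro weighted_sum_gt_if_all_but_one_gt[of N k]) auto
  also have "\<dots> = (vnorm2 (F *\<^sub>v x))\<^sup>2" unfolding x_eq by (rule norm_FU[OF y, symmetric])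
  also have "\<dots> \<le> (c * vnorm2 x)\<^sup>2"
    using bound[of \<alpha> \<beta>] vnorm2_nonneg unfolding x_def by (intro power_mono) auto
  also have "\<dots> = c\<^sup>2 * (\<Sum>i<N. (cmod (y $ i))\<^sup>2)"
    unfolding x_eq vnorm2_unitary_mult[OF U y] power_mult_distrib vnorm2_square using y by simp
  finally show False by simp
qed

theorem sval_second_smallest_le_spec_norm:
  fixes F G :: "complex mat" and a b :: "complex vec"
  assumes F: "F \<in> carrier_mat r N" and G: "G \<in> carrier_mat r N" and N: "2 \<le> N"
    and a: "a \<in> carrier_vec N" and b: "b \<in> carrier_vec N"
    and indep: "\<And>\<alpha> \<beta>. \<alpha> \<cdot>\<^sub>v a + \<beta> \<cdot>\<^sub>v b = 0\<^sub>v N \<Longrightarrow> \<alpha> = 0 \<and> \<beta> = 0"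
    and ker: "(F + G) *\<^sub>v a = 0\<^sub>v r" "(F + G) *\<^sub>v b = 0\<^sub>v r"
  shows "sval (N - 1) F \<le> spec_norm G"
proof (rule sval_second_smallest_le[OF F N a b indep])
  fix \<alpha> \<beta> :: complex
  define x where "x = \<alpha> \<cdot>\<^sub>v a + \<beta> \<cdot>\<^sub>v b"
  have x: "x \<in> carrier_vec N" unfolding x_def using a b by simp
  have FG: "F + G \<in> carrier_mat r N" using F G by simp
  have "(F + G) *\<^sub>v x = \<alpha> \<cdot>\<^sub>v ((F + G) *\<^sub>v a) + \<beta> \<cdot>\<^sub>v ((F + G) *\<^sub>v b)"
    unfolding x_def using FG a b by (simp add: mult_add_distrib_mat_vec[OF FG] mult_mat_vec[OF FG])
  also have "\<dots> = 0\<^sub>v r" unfolding ker by (intro eq_vecI) auto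
  finally have sum0: "F *\<^sub>v x + G *\<^sub>v x = 0\<^sub>v r"
    by (simp add: add_mult_distrib_mat_vec[OF F G x])
  have "F *\<^sub>v x = - (G *\<^sub>v x)"
  proof (rule eq_vecI)
    fix i assume "i < dim_vec (- (G *\<^sub>v x))"
    then have i: "i < r" using G by simp
    have "(F *\<^sub>v x) $ i + (G *\<^sub>v x) $ i = 0"
      using arg_cong[OF sum0, of "\<lambda>v. v $ i"] F G i by simp
    then show "(F *\<^sub>v x) $ i = (- (G *\<^sub>v x)) $ i"
      using i G by (simp add: eq_neg_iff_add_eq_0)
  qed (use F G in simp)
  then show "vnorm2 (F *\<^sub>v x) \<le> spec_norm G * vnorm2 x"
    using spec_norm_mult_vec_le[OF G x] by (simp add: vnorm2_uminus)
qed

subsection \<open>The block matrix \<open>F[R(\<mu>\<^sub>1,\<mu>\<^sub>2);\<gamma>]\<close>\<close>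

lemma mult_mat_vec_zero_vec [simp]: "A \<in> carrier_mat r c \<Longrightarrow> A *\<^sub>v 0\<^sub>v c = (0\<^sub>v r :: 'a :: comm_ring_1 vec)"
  by (intro eq_vecI) (auto simp: scalar_prod_def)

lemma zero_mat_mult_vec [simp]: "v \<in> carrier_vec c \<Longrightarrow> 0\<^sub>m r c *\<^sub>v v = (0\<^sub>v r :: 'a :: comm_ring_1 vec)"
  by (intro eq_vecI) (auto simp: scalar_prod_def)

lemma append_zero_vec [simp]: "0\<^sub>v n @\<^sub>v 0\<^sub>v m = 0\<^sub>v (n + m)"
  by (intro eq_vecI) auto

lemma append_vec_pair_independent:
  fixes x1 x2 w :: "complex vec"
  assumes x1: "x1 \<in> carrier_vec n" "x1 \<noteq> 0\<^sub>v n" and x2: "x2 \<in> carrier_vec m" "x2 \<noteq> 0\<^sub>v m"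
    and w: "w \<in> carrier_vec m"
    and comb: "\<alpha> \<cdot>\<^sub>v (0\<^sub>v n @\<^sub>v x2) + \<beta> \<cdot>\<^sub>v (x1 @\<^sub>v w) = 0\<^sub>v (n + m)"
  shows "\<alpha> = 0 \<and> \<beta> = 0"
proof -
  have comp: "\<alpha> * (0\<^sub>v n @\<^sub>v x2) $ i + \<beta> * (x1 @\<^sub>v w) $ i = 0" if "i < n + m" for i
    using arg_cong[OF comb, of "\<lambda>v. v $ i"] x1 x2 w that by simp
  obtain j where j: "j < n" "x1 $ j \<noteq> 0" using vec_nonzero_index[OF x1] .
  have \<beta>: "\<beta> = 0" using comp[of j] j x1 by simp
  obtain j' where j': "j' < m" "x2 $ j' \<noteq> 0" using vec_nonzero_index[OF x2] .
  have "\<alpha> = 0" using comp[of "n + j'"] j' x1 x2 \<beta> by simp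
  with \<beta> show ?thesis by simp
qed

lemma Fmat_carrier:
  assumes "R mu1 \<in> carrier_mat n n" "R mu2 \<in> carrier_mat n n"
  shows "Fmat n R mu1 mu2 g \<in> carrier_mat (n + n) (n + n)"
  unfolding Fmat_def using assms by (intro four_block_carrier_mat) auto

lemma Fmat_add:
  assumes "R1 mu1 \<in> carrier_mat n n" "R1 mu2 \<in> carrier_mat n n"
    "R2 mu1 \<in> carrier_mat n n" "R2 mu2 \<in> carrier_mat n n"
  shows "Fmat n (\<lambda>l. R1 l + R2 l) mu1 mu2 g = Fmat n R1 mu1 mu2 g + Fmat n R2 mu1 mu2 g"
  using assms unfolding Fmat_def divdiff_def by (intro eq_matI) (auto simp: algebra_simps)

lemma Fmat_kernel_lower:
  assumes R: "R mu1 \<in> carrier_mat n n" "R mu2 \<in> carrier_mat n n"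
    and x2: "x2 \<in> carrier_vec n" "R mu2 *\<^sub>v x2 = 0\<^sub>v n"
  shows "Fmat n R mu1 mu2 g *\<^sub>v (0\<^sub>v n @\<^sub>v x2) = 0\<^sub>v (n + n)"
proof -
  have dd: "g \<cdot>\<^sub>m divdiff R mu1 mu2 \<in> carrier_mat n n"
    unfolding divdiff_def using R by (intro smult_carrier_mat minus_carrier_mat)
  show ?thesis
    unfolding Fmat_def four_block_mat_mult_vec[OF R(1) zero_carrier_mat dd R(2) zero_carrier_vec x2(1)]
    using R dd x2 by simp
qed

lemma Fmat_kernel_upper:
  assumes R: "R mu1 \<in> carrier_mat n n" "R mu2 \<in> carrier_mat n n"
    and x1: "x1 \<in> carrier_vec n" "R mu1 *\<^sub>v x1 = 0\<^sub>v n" and mu: "mu1 \<noteq> mu2"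
  shows "Fmat n R mu1 mu2 g *\<^sub>v (x1 @\<^sub>v ((g / (mu1 - mu2)) \<cdot>\<^sub>v x1)) = 0\<^sub>v (n + n)"
proof -
  let ?c = "g / (mu1 - mu2)"
  have dd: "g \<cdot>\<^sub>m divdiff R mu1 mu2 \<in> carrier_mat n n"
    unfolding divdiff_def using R by (intro smult_carrier_mat minus_carrier_mat)
  have cx: "?c \<cdot>\<^sub>v x1 \<in> carrier_vec n" using x1(1) by simp
  have "(g \<cdot>\<^sub>m divdiff R mu1 mu2) *\<^sub>v x1 + R mu2 *\<^sub>v (?c \<cdot>\<^sub>v x1) = 0\<^sub>v n"
  proof (rule eq_vecI)
    fix i assume "i < dim_vec (0\<^sub>v n :: complex vec)"
    then have i: "i < n" by simp
    have Rx1: "(\<Sum>j\<in>{0..<n}. R mu1 $$ (i,j) * x1 $ j) = 0"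
      using arg_cong[OF x1(2), of "\<lambda>v. v $ i"] R x1(1) i by (simp add: scalar_prod_def)
    have "((g \<cdot>\<^sub>m divdiff R mu1 mu2) *\<^sub>v x1 + R mu2 *\<^sub>v (?c \<cdot>\<^sub>v x1)) $ i
      = (\<Sum>j\<in>{0..<n}. g * (1 / (mu1 - mu2) * (R mu1 $$ (i,j) - R mu2 $$ (i,j))) * x1 $ j)
        + (\<Sum>j\<in>{0..<n}. R mu2 $$ (i,j) * (?c * x1 $ j))"
      using R x1 i by (simp add: divdiff_def scalar_prod_def)
    also have "\<dots> = ?c * (\<Sum>j\<in>{0..<n}. R mu1 $$ (i,j) * x1 $ j)"
      by (simp add: sum_distrib_left sum_subtractf[symmetric] sum.distrib[symmetric] algebra_simps)
    finally show "((g \<cdot>\<^sub>m divdiff R mu1 mu2) *\<^sub>v x1 + R mu2 *\<^sub>v (?c \<cdot>\<^sub>v x1)) $ i = 0\<^sub>v n $ i"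
      using Rx1 i by simp
  qed (use R in auto)
  then show ?thesis
    unfolding Fmat_def four_block_mat_mult_vec[OF R(1) zero_carrier_mat dd R(2) x1(1) cx]
    using x1 cx by simp
qed

theorem lemma2:
  fixes n m :: nat and A D :: "nat \<Rightarrow> complex mat" and mu1 mu2 gamma :: complex
  assumes "\<And>j. j \<le> m \<Longrightarrow> A j \<in> carrier_mat n n"
    and "\<And>j. j \<le> m \<Longrightarrow> D j \<in> carrier_mat n n"
    and "mu1 \<noteq> mu2"
    and "is_mp_eigenvalue n (\<lambda>lam. mpoly_eval n m A lam + mpoly_eval n m D lam) mu1"
    and "is_mp_eigenvalue n (\<lambda>lam. mpoly_eval n m A lam + mpoly_eval n m D lam) mu2"
    and "gamma \<noteq> 0"
  shows "sval (2 * n - 1) (Fmat n (mpoly_eval n m A) mu1 mu2 gamma)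
           \<le> spec_norm (Fmat n (mpoly_eval n m D) mu1 mu2 gamma)"
proof -
  let ?P = "mpoly_eval n m A" and ?\<Delta> = "mpoly_eval n m D"
  let ?Q = "\<lambda>lam. ?P lam + ?\<Delta> lam"
  have carr: "?P l \<in> carrier_mat n n" "?\<Delta> l \<in> carrier_mat n n" "?Q l \<in> carrier_mat n n" for l
    unfolding mpoly_eval_def by auto
  obtain x1 where x1: "x1 \<in> carrier_vec n" "x1 \<noteq> 0\<^sub>v n" "?Q mu1 *\<^sub>v x1 = 0\<^sub>v n"
    using assms(4) unfolding is_mp_eigenvalue_def by blast
  obtain x2 where x2: "x2 \<in> carrier_vec n" "x2 \<noteq> 0\<^sub>v n" "?Q mu2 *\<^sub>v x2 = 0\<^sub>v n"
    using assms(5) unfolding is_mp_eigenvalue_def by blast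
  have "n \<noteq> 0" using x1(1,2) by (intro notI) (auto intro: eq_vecI)
  then have N: "2 \<le> n + n" by simp
  let ?b = "x1 @\<^sub>v ((gamma / (mu1 - mu2)) \<cdot>\<^sub>v x1)"
  have "sval (n + n - 1) (Fmat n ?P mu1 mu2 gamma) \<le> spec_norm (Fmat n ?\<Delta> mu1 mu2 gamma)"
  proof (rule sval_second_smallest_le_spec_norm[where a = "0\<^sub>v n @\<^sub>v x2" and b = ?b])
    show "(Fmat n ?P mu1 mu2 gamma + Fmat n ?\<Delta> mu1 mu2 gamma) *\<^sub>v (0\<^sub>v n @\<^sub>v x2) = 0\<^sub>v (n + n)"
      using Fmat_kernel_lower[of ?Q, OF carr(3) carr(3) x2(1,3)] Fmat_add[OF carr(1,1,2,2)] by simp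
    show "(Fmat n ?P mu1 mu2 gamma + Fmat n ?\<Delta> mu1 mu2 gamma) *\<^sub>v ?b = 0\<^sub>v (n + n)"
      using Fmat_kernel_upper[of ?Q, OF carr(3) carr(3) x1(1,3) assms(3)] Fmat_add[OF carr(1,1,2,2)] by simp
    show "\<alpha> = 0 \<and> \<beta> = 0" if "\<alpha> \<cdot>\<^sub>v (0\<^sub>v n @\<^sub>v x2) + \<beta> \<cdot>\<^sub>v ?b = 0\<^sub>v (n + n)" for \<alpha> \<beta>
      using append_vec_pair_independent[OF x1(1,2) x2(1,2) _ that] x1(1) by simp
  qed (use N x1 x2 carr Fmat_carrier in auto)
  then show ?thesis by (simp add: mult_2)
qed

end
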